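(* Let $H$ be an $\{m,m-1\}$-graph with clique number $\omega$, and let $\rho(H)$ be the spectral radius of its adjacency tensor. Then $$\omega\leq m-2+\big[(m-1)!\,\rho(H)\big]^{\frac{1}{m-1}}.$$
   Context: A general hypergraph $H=(V,E)$ has vertex set $V=[n]$ and edges that are subsets of $V$; it is an $\{m,m-1\}$-graph if the set of edge cardinalities $\{|e|:e\in E\}$ equals $\{m,m-1\}$, so its rank (maximum edge size) is $m$. A clique is a vertex set $W$ such that every subset of $W$ of cardinality $m$ or $m-1$ is an edge of $H$; the clique number $\omega$ is the maximum size of a clique (by convention $\omega=1$ if $E$ is empty). For $s\le m$ put $\alpha(s)=\sum_{k_1,\dots,k_s\ge1,\ k_1+\cdots+k_s=m}\frac{m!}{k_1!\cdots k_s!}$. The adjacency tensor $\mathcal A=(a_{i_1\cdots i_m})$ is the order-$m$, dimension-$n$ tensor with $a_{i_1\cdots i_m}=s/\alpha(s)$ whenever $\{i_1,\dots,i_m\}=e$ for some edge $e$ with $|e|=s$, and $0$ otherwise. $\lambda\in\mathbb C$ is an eigenvalue if there is nonzero $x\in\mathbb C^n$ with $\sum_{i_2,\dots,i_m}a_{ii_2\cdots i_m}x_{i_2}\cdots x_{i_m}=\lambda x_i^{m-1}$ for all $i$; $\rho(H)$ is the maximum modulus of the eigenvalues. *)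

theory Defs
  imports Complex_Main
begin

definition hypergraph :: "nat \<Rightarrow> nat set set \<Rightarrow> bool" where
  "hypergraph n E \<longleftrightarrow> (\<forall>e\<in>E. e \<noteq> {} \<and> e \<subseteq> {1..n})"

definition mm1_graph :: "nat \<Rightarrow> nat set set \<Rightarrow> bool" where
  "mm1_graph m E \<longleftrightarrow> card ` E = {m, m - 1}"

definition is_clique :: "nat \<Rightarrow> nat set set \<Rightarrow> nat \<Rightarrow> nat set \<Rightarrow> bool" where
  "is_clique n E m W \<longleftrightarrow> W \<subseteq> {1..n} \<and>
     (\<forall>S. S \<subseteq> W \<and> (card S = m \<or> card S = m - 1) \<longrightarrow> S \<in> E)"

definition clique_number :: "nat \<Rightarrow> nat set set \<Rightarrow> nat \<Rightarrow> nat" where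
  "clique_number n E m = (if E = {} then 1 else Max (card ` {W. is_clique n E m W}))"

definition alpha :: "nat \<Rightarrow> nat \<Rightarrow> real" where
  "alpha m s = (\<Sum>ks\<in>{ks. length ks = s \<and> set ks \<subseteq> {1..m} \<and> sum_list ks = m}.
                  fact m / (\<Prod>k\<leftarrow>ks. fact k))"

text \<open>Adjacency tensor entry a_{i_1...i_m}, index tuple given as a list of length m.\<close>
definition adj_tensor :: "nat set set \<Rightarrow> nat \<Rightarrow> nat list \<Rightarrow> real" where
  "adj_tensor E m is = (if \<exists>e\<in>E. set is = e
      then real (card (set is)) / alpha m (card (set is)) else 0)"

definition tuples :: "nat \<Rightarrow> nat \<Rightarrow> nat list set" where
  "tuples n k = {xs. length xs = k \<and> set xs \<subseteq> {1..n}}"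

definition tensor_eigenvalue :: "nat \<Rightarrow> nat set set \<Rightarrow> nat \<Rightarrow> complex \<Rightarrow> bool" where
  "tensor_eigenvalue n E m lam \<longleftrightarrow> (\<exists>x :: nat \<Rightarrow> complex. (\<exists>i\<in>{1..n}. x i \<noteq> 0) \<and>
     (\<forall>i\<in>{1..n}. (\<Sum>xs\<in>tuples n (m - 1). of_real (adj_tensor E m (i # xs)) * (\<Prod>j\<leftarrow>xs. x j))
                  = lam * x i ^ (m - 1)))"

definition spectral_radius_H :: "nat \<Rightarrow> nat set set \<Rightarrow> nat \<Rightarrow> real" where
  "spectral_radius_H n E m = Sup {cmod lam | lam. tensor_eigenvalue n E m lam}"

end

theory Submission imports Defs "HOL-Analysis.Analysis" begin

text \<open>The adjacency tensor \<open>A\<close> is nonnegative and symmetric. On the nonnegative orthant the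
  quotient \<open>A x\<^sup>m / \<Sum> x\<^sub>j\<^sup>m\<close> attains its maximum \<open>\<mu>\<close> (compactness of the simplex plus
  homogeneity), and the first-order optimality conditions at a maximizer say that it is a
  nonnegative eigenvector with eigenvalue \<open>\<mu>\<close>; hence \<open>A x\<^sup>m \<le> \<rho>(H) \<Sum> x\<^sub>j\<^sup>m\<close> for all
  \<open>x \<ge> 0\<close>.

  Test this with the indicator vector of a maximum clique \<open>W\<close>, \<open>|W| = \<omega> \<ge> m - 1\<close>. For
  \<open>i \<in> W\<close>, the \<open>(m-1)\<close>-tuples of distinct vertices of \<open>W\<close> avoiding \<open>i\<close> complete \<open>i\<close> to an
  \<open>m\<close>-edge (entry \<open>1/(m-1)!\<close>), and the \<open>(m-1)Q\<close> tuples containing \<open>i\<close> span an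
  \<open>(m-1)\<close>-edge (entry \<open>2/m!\<close>), where \<open>Q = (\<omega>+2-m)\<cdots>(\<omega>-1) \<ge> (\<omega>+2-m)\<^sup>m\<^sup>-\<^sup>2\<close>. Counting gives
  \<open>(A 1\<^sub>W\<^sup>m\<^sup>-\<^sup>1)\<^sub>i \<ge> (\<omega>+2-m)\<^sup>m\<^sup>-\<^sup>1/(m-1)!\<close>, so
  \<open>\<omega> (\<omega>+2-m)\<^sup>m\<^sup>-\<^sup>1/(m-1)! \<le> A 1\<^sub>W\<^sup>m \<le> \<rho>(H) \<omega>\<close>.\<close>

section \<open>Entries of the adjacency tensor\<close>

lemma sum_list_positive_ge_length:
  fixes ks :: "nat list"
  assumes "\<forall>k\<in>set ks. 1 \<le> k"
  shows "length ks \<le> sum_list ks"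
  using assms by (induction ks) auto

lemma sum_list_positive_eq_length:
  fixes ks :: "nat list"
  assumes "\<forall>k\<in>set ks. 1 \<le> k" "sum_list ks = length ks"
  shows "ks = replicate (length ks) 1"
  using assms
proof (induction ks)
  case (Cons a ks)
  have "length ks \<le> sum_list ks" using Cons.prems(1) sum_list_positive_ge_length by simp
  with Cons.prems have "a = 1" "sum_list ks = length ks" by auto
  with Cons show ?case by simp
qed simp

lemma sum_list_positive_eq_Suc_length:
  fixes ks :: "nat list"
  assumes "\<forall>k\<in>set ks. 1 \<le> k" "sum_list ks = Suc (length ks)"
  shows "\<exists>j<length ks. ks = replicate j 1 @ 2 # replicate (length ks - j - 1) 1"
  using assms
proof (induction ks)
  case (Cons a ks)
  have "length ks \<le> sum_list ks" using Cons.prems(1) sum_list_positive_ge_length by simp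
  show ?case
  proof (cases "a = 1")
    case True
    then obtain j where "j < length ks" "ks = replicate j 1 @ 2 # replicate (length ks - j - 1) 1"
      using Cons.IH Cons.prems by auto
    then show ?thesis using True by (intro exI[of _ "Suc j"]) auto
  next
    case False
    with Cons.prems \<open>length ks \<le> sum_list ks\<close> have "a = 2" "sum_list ks = length ks" by auto
    then show ?thesis using sum_list_positive_eq_length Cons.prems by (intro exI[of _ 0]) auto
  qed
qed simp

lemma alpha_rank: "alpha m m = fact m"
proof -
  have "{ks. length ks = m \<and> set ks \<subseteq> {1..m} \<and> sum_list ks = m} = {replicate m (1::nat)}"
  proof (intro equalityI subsetI)
    fix ks assume "ks \<in> {ks. length ks = m \<and> set ks \<subseteq> {1..m} \<and> sum_list ks = m}"
    then have "\<forall>k\<in>set ks. 1 \<le> k" "length ks = m" "sum_list ks = length ks" by auto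
    then show "ks \<in> {replicate m 1}" using sum_list_positive_eq_length[of ks] by simp
  qed (cases "m = 0"; auto simp: sum_list_replicate)
  then show ?thesis unfolding alpha_def by simp
qed

lemma alpha_rank_minus_1:
  assumes "m \<ge> 2"
  shows "alpha m (m - 1) = real (m - 1) * fact m / 2"
proof -
  define L where "L j = replicate j (1::nat) @ 2 # replicate (m - 2 - j) 1" for j
  have "{ks. length ks = m - 1 \<and> set ks \<subseteq> {1..m} \<and> sum_list ks = m} = L ` {..<m - 1}"
  proof (intro equalityI subsetI)
    fix ks assume ks: "ks \<in> {ks. length ks = m - 1 \<and> set ks \<subseteq> {1..m} \<and> sum_list ks = m}"
    then have "\<forall>k\<in>set ks. 1 \<le> k" "sum_list ks = Suc (length ks)" using assms by auto
    then obtain j where "j < length ks" "ks = replicate j 1 @ 2 # replicate (length ks - j - 1) 1"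
      using sum_list_positive_eq_Suc_length[of ks] by blast
    then show "ks \<in> L ` {..<m - 1}" using ks unfolding L_def by (intro image_eqI[of _ _ j]) auto
  qed (use assms in \<open>auto simp: L_def sum_list_replicate\<close>)
  moreover have "inj_on L {..<m - 1}"
  proof (rule inj_onI)
    fix j k assume "j \<in> {..<m - 1}" "k \<in> {..<m - 1}" "L j = L k"
    then have "L j ! j = L k ! j" "L j ! k = L k ! k" by simp_all
    then show "j = k" using \<open>j \<in> {..<m - 1}\<close> \<open>k \<in> {..<m - 1}\<close> unfolding L_def
      by (cases "j < k") (auto simp: nth_append nth_Cons' split: if_splits)
  qed
  moreover have "(\<Prod>k\<leftarrow>L j. fact k) = (2 :: real)" for j
    unfolding L_def by simp
  ultimately show ?thesis unfolding alpha_def by (simp add: sum.reindex del: One_nat_def)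
qed

lemma adj_tensor_nonneg: "adj_tensor E m t \<ge> 0"
  unfolding adj_tensor_def alpha_def
  by (auto intro!: sum_nonneg divide_nonneg_nonneg prod_list_nonneg)

lemma adj_tensor_rank_edge:
  assumes "set t \<in> E" "card (set t) = m" "m \<ge> 1"
  shows "adj_tensor E m t = 1 / fact (m - 1)"
  using assms fact_reduce[of m] by (auto simp: adj_tensor_def alpha_rank field_simps)

lemma adj_tensor_rank_minus_1_edge:
  assumes "set t \<in> E" "card (set t) = m - 1" "m \<ge> 2"
  shows "adj_tensor E m t = 2 / fact m"
proof -
  have "adj_tensor E m t = real (m - 1) / alpha m (m - 1)"
    using assms by (auto simp: adj_tensor_def)
  also have "\<dots> = 2 / fact m"
    using assms unfolding alpha_rank_minus_1[OF assms(3)] by (simp add: of_nat_diff field_simps)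
  finally show ?thesis .
qed

section \<open>Forms of symmetric tensors\<close>

definition symmetric_tensor :: "(nat list \<Rightarrow> real) \<Rightarrow> bool" where
  "symmetric_tensor a \<longleftrightarrow> (\<forall>s t. mset s = mset t \<longrightarrow> a s = a t)"

text \<open>In tensor notation, \<open>tensor_apply n m a x i\<close> is \<open>(a x\<^sup>m\<^sup>-\<^sup>1)\<^sub>i\<close>
  and \<open>tensor_form n m a x\<close> is \<open>a x\<^sup>m\<close>; only the values of \<open>x\<close> on \<open>{1..n}\<close> enter.\<close>

definition tensor_apply :: "nat \<Rightarrow> nat \<Rightarrow> (nat list \<Rightarrow> real) \<Rightarrow> (nat \<Rightarrow> real) \<Rightarrow> nat \<Rightarrow> real" where
  "tensor_apply n m a x i = (\<Sum>xs\<in>tuples n (m - 1). a (i # xs) * prod_list (map x xs))"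

definition tensor_form :: "nat \<Rightarrow> nat \<Rightarrow> (nat list \<Rightarrow> real) \<Rightarrow> (nat \<Rightarrow> real) \<Rightarrow> real" where
  "tensor_form n m a x = (\<Sum>t\<in>tuples n m. a t * prod_list (map x t))"

definition power_sum :: "nat \<Rightarrow> nat \<Rightarrow> (nat \<Rightarrow> real) \<Rightarrow> real" where
  "power_sum n m x = (\<Sum>i\<in>{1..n}. x i ^ m)"

lemma symmetric_tensorD: "symmetric_tensor a \<Longrightarrow> mset s = mset t \<Longrightarrow> a s = a t"
  unfolding symmetric_tensor_def by blast

lemma symmetric_adj_tensor: "symmetric_tensor (adj_tensor E m)"
  unfolding symmetric_tensor_def adj_tensor_def by (metis mset_eq_setD)

lemma finite_tuples [simp]: "finite (tuples n k)"
proof -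
  have "tuples n k = {xs. set xs \<subseteq> {1..n} \<and> length xs = k}" unfolding tuples_def by auto
  then show ?thesis using finite_lists_length_eq[of "{1..n}" k] by simp
qed

lemma tuples_Suc: "tuples n (Suc k) = (\<lambda>(i, xs). i # xs) ` ({1..n} \<times> tuples n k)"
  unfolding tuples_def by (auto simp: length_Suc_conv image_iff)

lemma tensor_form_eq_sum_tensor_apply:
  assumes "m \<ge> 1"
  shows "tensor_form n m a x = (\<Sum>i\<in>{1..n}. x i * tensor_apply n m a x i)"
proof -
  obtain k where k: "m = Suc k" using assms by (cases m) auto
  have inj: "inj_on (\<lambda>(i, xs). i # xs) ({1..n} \<times> tuples n k)" by (auto simp: inj_on_def)
  have "tensor_form n m a x = (\<Sum>(i, xs)\<in>{1..n} \<times> tuples n k. a (i # xs) * (x i * prod_list (map x xs)))"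
    unfolding tensor_form_def k tuples_Suc sum.reindex[OF inj] by (simp add: case_prod_beta)
  also have "\<dots> = (\<Sum>i\<in>{1..n}. x i * tensor_apply n m a x i)"
    unfolding sum.cartesian_product[symmetric] tensor_apply_def k
    by (simp add: sum_distrib_left mult_ac)
  finally show ?thesis .
qed

lemma tensor_apply_nonneg:
  assumes "\<And>t. a t \<ge> 0" "\<And>j. j \<in> {1..n} \<Longrightarrow> x j \<ge> 0"
  shows "tensor_apply n m a x i \<ge> 0"
  unfolding tensor_apply_def tuples_def
  using assms by (intro sum_nonneg mult_nonneg_nonneg prod_list_nonneg) auto

lemma tensor_form_vanishing:
  assumes "m \<ge> 1" "\<And>j. j \<in> {1..n} \<Longrightarrow> x j = 0"
  shows "tensor_form n m a x = 0"
  unfolding tensor_form_def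
proof (intro sum.neutral ballI)
  fix t assume "t \<in> tuples n m"
  then have "t \<noteq> []" "set t \<subseteq> {1..n}" using assms unfolding tuples_def by auto
  then have "0 \<in> set (map x t)" using assms by (cases t) auto
  then show "a t * prod_list (map x t) = 0" by (simp add: prod_list_zero_iff)
qed

lemma tensor_form_divide:
  "tensor_form n m a (\<lambda>j. if j \<in> {1..n} then x j / c else 0) = tensor_form n m a x / c ^ m"
  unfolding tensor_form_def sum_divide_distrib
proof (intro sum.cong refl)
  fix t assume "t \<in> tuples n m"
  then have "set t \<subseteq> {1..n}" "length t = m" unfolding tuples_def by auto
  then have "prod_list (map (\<lambda>j. if j \<in> {1..n} then x j / c else 0) t) = prod_list (map x t) / c ^ m"
    by (induction t arbitrary: m) auto
  then show "a t * prod_list (map (\<lambda>j. if j \<in> {1..n} then x j / c else 0) t) =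
      a t * prod_list (map x t) / c ^ m" by simp
qed

lemma power_sum_divide:
  "power_sum n m (\<lambda>j. if j \<in> {1..n} then x j / c else 0) = power_sum n m x / c ^ m"
  unfolding power_sum_def sum_divide_distrib by (intro sum.cong refl) (simp add: power_divide)

lemma power_sum_pos:
  assumes "\<And>j. j \<in> {1..n} \<Longrightarrow> x j \<ge> 0" "i \<in> {1..n}" "x i > 0"
  shows "power_sum n m x > 0"
proof -
  have "0 < x i ^ m" using assms by simp
  also have "\<dots> \<le> power_sum n m x" unfolding power_sum_def
    using assms by (intro member_le_sum) auto
  finally show ?thesis .
qed

lemma continuous_on_tensor_form: "continuous_on S (tensor_form n m a)"
proof -
  have "continuous_on S (\<lambda>x::nat \<Rightarrow> real. prod_list (map x t))" for t
    by (induction t) (auto intro!: continuous_intros continuous_on_subset[OF continuous_on_product_coordinates])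
  then show ?thesis unfolding tensor_form_def by (intro continuous_intros) auto
qed

lemma continuous_on_power_sum: "continuous_on S (power_sum n m)"
  unfolding power_sum_def by (intro continuous_intros continuous_on_subset[OF continuous_on_product_coordinates]) auto

section \<open>Partial derivatives of the tensor form\<close>

definition insert_at :: "nat \<Rightarrow> 'a \<Rightarrow> 'a list \<Rightarrow> 'a list" where
  "insert_at k i xs = take k xs @ i # drop k xs"

lemma mset_insert_at: "mset (insert_at k i xs) = mset (i # xs)"
  unfolding insert_at_def by (metis append_take_drop_id mset.simps(2) mset_append union_mset_add_mset_right)

lemma nth_insert_at_skip:
  assumes "k \<le> length xs" "l < length xs"
  shows "insert_at k i xs ! (if l < k then l else Suc l) = xs ! l"
  using assms unfolding insert_at_def by (auto simp: nth_append min_def Suc_diff_le)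

lemma insert_at_inject:
  assumes "k \<le> length xs" "k \<le> length ys" "insert_at k i xs = insert_at k i ys"
  shows "xs = ys"
proof -
  have split: "take k (insert_at k i zs) = take k zs" "drop (Suc k) (insert_at k i zs) = drop k zs"
    if "k \<le> length zs" for zs
    using that by (simp_all add: insert_at_def)
  show ?thesis
    using split[OF assms(1)] split[OF assms(2)] assms(3) by (metis append_take_drop_id)
qed

lemma prod_skip_insert_at:
  assumes "length xs = m - 1" "k < m"
  shows "(\<Prod>l\<in>{0..<m} - {k}. f (insert_at k i xs ! l)) = prod_list (map f xs)"
proof -
  define h where "h l = (if l < k then l else Suc l)" for l
  have bij: "bij_betw h {0..<m - 1} ({0..<m} - {k})"
  proof (rule bij_betw_imageI)
    show "inj_on h {0..<m - 1}" unfolding h_def by (auto simp: inj_on_def split: if_splits)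
    have "l \<in> h ` {0..<m - 1}" if "l \<in> {0..<m} - {k}" for l
      using that assms(2) unfolding h_def
      by (cases "l < k") (auto intro!: image_eqI[of _ _ l] image_eqI[of _ _ "l - 1"])
    moreover have "h ` {0..<m - 1} \<subseteq> {0..<m} - {k}"
      using assms(2) unfolding h_def by auto
    ultimately show "h ` {0..<m - 1} = {0..<m} - {k}" by blast
  qed
  have "(\<Prod>l\<in>{0..<m} - {k}. f (insert_at k i xs ! l)) = (\<Prod>l\<in>{0..<m - 1}. f (insert_at k i xs ! h l))"
    using prod.reindex_bij_betw[OF bij, of "\<lambda>l. f (insert_at k i xs ! l)"] by simp
  also have "\<dots> = (\<Prod>l\<in>{0..<m - 1}. f (xs ! l))"
    using nth_insert_at_skip[of k xs] assms unfolding h_def by (intro prod.cong) auto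
  also have "\<dots> = prod_list (map f xs)"
    using assms by (simp add: prod.list_conv_set_nth)
  finally show ?thesis .
qed

lemma tuples_nth_eq_image_insert_at:
  assumes "k < m" "i \<in> {1..n}"
  shows "{t \<in> tuples n m. t ! k = i} = insert_at k i ` tuples n (m - 1)"
proof (intro equalityI subsetI)
  fix t assume "t \<in> {t \<in> tuples n m. t ! k = i}"
  then have t: "length t = m" "set t \<subseteq> {1..n}" "t ! k = i" unfolding tuples_def by auto
  then have "t = insert_at k i (take k t @ drop (Suc k) t)"
    unfolding insert_at_def using assms id_take_nth_drop[of k t] by (simp add: min_def)
  moreover have "take k t @ drop (Suc k) t \<in> tuples n (m - 1)"
    unfolding tuples_def using t assms by (auto dest: in_set_takeD in_set_dropD)
  ultimately show "t \<in> insert_at k i ` tuples n (m - 1)" by blast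
next
  fix t assume "t \<in> insert_at k i ` tuples n (m - 1)"
  then obtain xs where "length xs = m - 1" "set xs \<subseteq> {1..n}" "t = insert_at k i xs"
    unfolding tuples_def by auto
  moreover have "set (insert_at k i xs) = insert i (set xs)"
    using mset_insert_at[of k i xs] by (metis mset.simps(2) set_mset_add_mset_insert set_mset_mset)
  ultimately show "t \<in> {t \<in> tuples n m. t ! k = i}"
    using assms unfolding tuples_def by (auto simp: insert_at_def nth_append)
qed

lemma sum_tuples_fixed_position:
  assumes "symmetric_tensor a" "k < m" "i \<in> {1..n}"
  shows "(\<Sum>t\<in>tuples n m. a t * ((if t ! k = i then 1 else 0) * (\<Prod>l\<in>{0..<m} - {k}. x (t ! l))))
         = tensor_apply n m a x i"
proof -
  have inj: "inj_on (insert_at k i) (tuples n (m - 1))"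
  proof (rule inj_onI)
    fix xs ys assume "xs \<in> tuples n (m - 1)" "ys \<in> tuples n (m - 1)" "insert_at k i xs = insert_at k i ys"
    then show "xs = ys" using assms(2) insert_at_inject[of k xs ys i] by (simp add: tuples_def)
  qed
  have "(\<Sum>t\<in>tuples n m. a t * ((if t ! k = i then 1 else 0) * (\<Prod>l\<in>{0..<m} - {k}. x (t ! l))))
      = (\<Sum>t\<in>{t \<in> tuples n m. t ! k = i}. a t * (\<Prod>l\<in>{0..<m} - {k}. x (t ! l)))"
    by (simp add: sum.inter_filter) (intro sum.cong; simp)
  also have "\<dots> = (\<Sum>xs\<in>tuples n (m - 1). a (insert_at k i xs) * (\<Prod>l\<in>{0..<m} - {k}. x (insert_at k i xs ! l)))"
    unfolding tuples_nth_eq_image_insert_at[OF assms(2,3)] sum.reindex[OF inj] by simp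
  also have "\<dots> = tensor_apply n m a x i"
    unfolding tensor_apply_def
  proof (intro sum.cong refl)
    fix xs assume "xs \<in> tuples n (m - 1)"
    moreover have "a (insert_at k i xs) = a (i # xs)"
      by (rule symmetric_tensorD[OF assms(1) mset_insert_at])
    ultimately show "a (insert_at k i xs) * (\<Prod>l\<in>{0..<m} - {k}. x (insert_at k i xs ! l))
        = a (i # xs) * prod_list (map x xs)"
      using assms(2) by (simp add: tuples_def prod_skip_insert_at)
  qed
  finally show ?thesis .
qed

lemma has_real_derivative_tensor_form_coordinate:
  assumes "symmetric_tensor a" "i \<in> {1..n}"
  shows "((\<lambda>s. tensor_form n m a (x(i := x i + s))) has_real_derivative real m * tensor_apply n m a x i) (at 0)"
proof -
  define e where "e j = (if j = i then 1 else (0::real))" for j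
  have "tensor_form n m a (x(i := x i + s)) =
      (\<Sum>t\<in>tuples n m. a t * (\<Prod>l\<in>{0..<m}. x (t ! l) + s * e (t ! l)))" for s
  proof -
    have "x(i := x i + s) = (\<lambda>j. x j + s * e j)" by (auto simp: e_def)
    then show ?thesis
      unfolding tensor_form_def by (intro sum.cong refl) (auto simp: tuples_def prod.list_conv_set_nth)
  qed
  moreover have "((\<lambda>s. \<Sum>t\<in>tuples n m. a t * (\<Prod>l\<in>{0..<m}. x (t ! l) + s * e (t ! l)))
     has_real_derivative (\<Sum>t\<in>tuples n m. a t *
        (\<Sum>k\<in>{0..<m}. e (t ! k) * (\<Prod>l\<in>{0..<m} - {k}. x (t ! l) + 0 * e (t ! l))))) (at 0)"
    by (intro DERIV_sum DERIV_cmult has_field_derivative_prod) (auto intro!: derivative_eq_intros)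
  moreover have "(\<Sum>t\<in>tuples n m. a t *
        (\<Sum>k\<in>{0..<m}. e (t ! k) * (\<Prod>l\<in>{0..<m} - {k}. x (t ! l) + 0 * e (t ! l))))
      = (\<Sum>k\<in>{0..<m}. \<Sum>t\<in>tuples n m. a t * ((if t ! k = i then 1 else 0) * (\<Prod>l\<in>{0..<m} - {k}. x (t ! l))))"
    by (subst sum.swap) (simp add: sum_distrib_left e_def)
  moreover have "\<dots> = real m * tensor_apply n m a x i"
    using sum_tuples_fixed_position[OF assms(1) _ assms(2)] by simp
  ultimately show ?thesis by simp
qed

lemma has_real_derivative_power_sum_coordinate:
  assumes "i \<in> {1..n}"
  shows "((\<lambda>s. power_sum n m (x(i := x i + s))) has_real_derivative real m * x i ^ (m - 1)) (at 0)"
proof -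
  have "power_sum n m (x(i := x i + s)) = (x i + s) ^ m + (\<Sum>j\<in>{1..n} - {i}. x j ^ m)" for s
    unfolding power_sum_def using assms by (simp add: sum.remove)
  moreover have "((\<lambda>s. (x i + s) ^ m + (\<Sum>j\<in>{1..n} - {i}. x j ^ m))
      has_real_derivative real m * x i ^ (m - 1)) (at 0)"
    by (auto intro!: derivative_eq_intros)
  ultimately show ?thesis by simp
qed

section \<open>Maximizing the Rayleigh quotient\<close>

definition prob_simplex :: "nat \<Rightarrow> (nat \<Rightarrow> real) set" where
  "prob_simplex n = PiE UNIV (\<lambda>j. if j \<in> {1..n} then {0..1} else {0}) \<inter> {x. (\<Sum>j\<in>{1..n}. x j) = 1}"

lemma compact_prob_simplex: "compact (prob_simplex n)"
proof -
  have "compactin (product_topology (\<lambda>i. euclidean) UNIV)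
          (PiE UNIV (\<lambda>j. if j \<in> {1..n} then {0..1::real} else {0}))"
    by (subst compactin_PiE) auto
  then have "compact (PiE UNIV (\<lambda>j. if j \<in> {1..n} then {0..1::real} else {0}))"
    by (simp add: euclidean_product_topology)
  moreover have "closed {x::nat \<Rightarrow> real. (\<Sum>j\<in>{1..n}. x j) = 1}"
    by (intro closed_Collect_eq continuous_intros continuous_on_subset[OF continuous_on_product_coordinates])
       auto
  ultimately show ?thesis unfolding prob_simplex_def by auto
qed

lemma mem_prob_simplex_iff:
  "x \<in> prob_simplex n \<longleftrightarrow>
     (\<forall>j\<in>{1..n}. 0 \<le> x j) \<and> (\<forall>j. j \<notin> {1..n} \<longrightarrow> x j = 0) \<and> (\<Sum>j\<in>{1..n}. x j) = 1"
proof -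
  have "x j \<le> 1" if "\<forall>j\<in>{1..n}. 0 \<le> x j" "(\<Sum>j\<in>{1..n}. x j) = 1" "j \<in> {1..n}" for j
    using that member_le_sum[of j "{1..n}" x] by auto
  then show ?thesis unfolding prob_simplex_def by (auto simp: PiE_iff split: if_splits)
qed

lemma tensor_form_bound_from_prob_simplex:
  assumes "m \<ge> 1" "\<forall>z\<in>prob_simplex n. tensor_form n m a z \<le> \<mu> * power_sum n m z"
    and "\<forall>j\<in>{1..n}. y j \<ge> 0"
  shows "tensor_form n m a y \<le> \<mu> * power_sum n m y"
proof (cases "\<forall>j\<in>{1..n}. y j = 0")
  case True
  then show ?thesis
    using tensor_form_vanishing[OF assms(1)] assms(1) by (simp add: power_sum_def power_0_left)
next
  case False
  then obtain j where j: "j \<in> {1..n}" "y j > 0" using assms(3) by force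
  define c where "c = (\<Sum>j\<in>{1..n}. y j)"
  have "y j \<le> c" unfolding c_def using j assms(3) by (intro member_le_sum) auto
  then have "c > 0" using j by simp
  define z where "z j = (if j \<in> {1..n} then y j / c else 0)" for j
  have "(\<Sum>j\<in>{1..n}. z j) = 1"
    using \<open>c > 0\<close> unfolding z_def c_def by (simp add: sum_divide_distrib[symmetric])
  then have "z \<in> prob_simplex n"
    using assms(3) \<open>c > 0\<close> unfolding mem_prob_simplex_iff z_def by auto
  then have "tensor_form n m a z \<le> \<mu> * power_sum n m z" using assms(2) by blast
  then have "tensor_form n m a y / c ^ m \<le> \<mu> * (power_sum n m y / c ^ m)"
    unfolding z_def tensor_form_divide power_sum_divide .
  then show ?thesis using \<open>c > 0\<close> by (simp add: divide_le_eq)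
qed

lemma rayleigh_maximizer_exists:
  assumes "m \<ge> 1" "n \<ge> 1"
  obtains x \<mu> where "\<forall>j\<in>{1..n}. x j \<ge> 0" "\<exists>j\<in>{1..n}. x j \<noteq> 0"
    "tensor_form n m a x = \<mu> * power_sum n m x"
    "\<forall>y. (\<forall>j\<in>{1..n}. y j \<ge> 0) \<longrightarrow> tensor_form n m a y \<le> \<mu> * power_sum n m y"
proof -
  have support: "\<forall>j\<in>{1..n}. x j \<ge> 0" "\<exists>j\<in>{1..n}. x j \<noteq> 0" if "x \<in> prob_simplex n" for x
    using that unfolding mem_prob_simplex_iff by (metis sum.neutral zero_neq_one)+
  have positive: "power_sum n m x > 0" if "x \<in> prob_simplex n" for x
    using support[OF that] power_sum_pos[of n x] by force
  define R where "R x = tensor_form n m a x / power_sum n m x" for x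
  have "continuous_on (prob_simplex n) R"
    unfolding R_def using positive
    by (intro continuous_on_divide continuous_on_tensor_form continuous_on_power_sum) force
  moreover have "(\<lambda>j. if j = 1 then 1 else 0) \<in> prob_simplex n"
    using assms unfolding mem_prob_simplex_iff by auto
  ultimately obtain x where x: "x \<in> prob_simplex n" and max: "\<And>z. z \<in> prob_simplex n \<Longrightarrow> R z \<le> R x"
    using continuous_attains_sup[OF compact_prob_simplex] by blast
  have "\<forall>z\<in>prob_simplex n. tensor_form n m a z \<le> R x * power_sum n m z"
    using max positive unfolding R_def by (simp add: divide_le_eq)
  then have "\<forall>y. (\<forall>j\<in>{1..n}. y j \<ge> 0) \<longrightarrow> tensor_form n m a y \<le> R x * power_sum n m y"
    using tensor_form_bound_from_prob_simplex[OF assms(1)] by blast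
  moreover have "tensor_form n m a x = R x * power_sum n m x"
    unfolding R_def using positive[OF x] by simp
  ultimately show thesis using that support[OF x] by blast
qed

text \<open>First-order optimality conditions at a maximizer of the Rayleigh quotient: along the
  \<open>i\<close>-th coordinate the nonnegative function \<open>\<mu> \<Sum> x\<^sub>j\<^sup>m - a x\<^sup>m\<close> has a minimum at the
  maximizer, interior if \<open>x\<^sub>i > 0\<close> and one-sided if \<open>x\<^sub>i = 0\<close>.\<close>

lemma rayleigh_maximizer_eigenvector:
  assumes "m \<ge> 2" "symmetric_tensor a" "\<And>t. a t \<ge> 0" "\<forall>j\<in>{1..n}. x j \<ge> 0"
    and "tensor_form n m a x = \<mu> * power_sum n m x"
    and "\<forall>y. (\<forall>j\<in>{1..n}. y j \<ge> 0) \<longrightarrow> tensor_form n m a y \<le> \<mu> * power_sum n m y"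
    and i: "i \<in> {1..n}"
  shows "tensor_apply n m a x i = \<mu> * x i ^ (m - 1)"
proof -
  define g where "g s = \<mu> * power_sum n m (x(i := x i + s)) - tensor_form n m a (x(i := x i + s))" for s
  have g_nonneg: "g s \<ge> 0" if "s \<ge> - x i" for s
    using that assms(4,6) unfolding g_def by auto
  have g0: "g 0 = 0" unfolding g_def using assms(5) by simp
  have "(g has_real_derivative \<mu> * (real m * x i ^ (m - 1)) - real m * tensor_apply n m a x i) (at 0)"
    unfolding g_def
    by (intro DERIV_diff DERIV_cmult has_real_derivative_power_sum_coordinate
        has_real_derivative_tensor_form_coordinate assms(2) i)
  then have dg: "(g has_real_derivative real m * (\<mu> * x i ^ (m - 1) - tensor_apply n m a x i)) (at 0)"
    by (simp add: algebra_simps)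
  show ?thesis
  proof (cases "x i > 0")
    case True
    have "\<forall>s. \<bar>0 - s\<bar> < x i \<longrightarrow> g 0 \<le> g s" using g_nonneg g0 by auto
    then have "real m * (\<mu> * x i ^ (m - 1) - tensor_apply n m a x i) = 0"
      using DERIV_local_min[OF dg True] by blast
    then show ?thesis using assms(1) by simp
  next
    case False
    then have xi: "x i = 0" using assms(4) i by force
    have "\<not> real m * (\<mu> * x i ^ (m - 1) - tensor_apply n m a x i) < 0"
    proof
      assume "real m * (\<mu> * x i ^ (m - 1) - tensor_apply n m a x i) < 0"
      from DERIV_neg_dec_right[OF dg this] obtain d where "d > 0" "\<And>h. 0 < h \<Longrightarrow> h < d \<Longrightarrow> g (0 + h) < g 0"
        by blast
      then have "g (d / 2) < 0" using g0 by auto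
      moreover have "g (d / 2) \<ge> 0" using g_nonneg xi \<open>d > 0\<close> by auto
      ultimately show False by simp
    qed
    moreover have "tensor_apply n m a x i \<ge> 0" using tensor_apply_nonneg assms(3,4) by blast
    ultimately show ?thesis using xi assms(1) by (simp add: zero_power zero_less_mult_iff)
  qed
qed

section \<open>Comparison with the spectral radius\<close>

lemma of_real_prod_list: "of_real (prod_list (map f xs)) = prod_list (map (\<lambda>j. of_real (f j)) xs)"
  by (induction xs) auto

lemma norm_prod_list_le:
  fixes x :: "nat \<Rightarrow> 'a::real_normed_div_algebra"
  assumes "\<And>j. j \<in> set xs \<Longrightarrow> norm (x j) \<le> M"
  shows "norm (prod_list (map x xs)) \<le> M ^ length xs"
  using assms
proof (induction xs)
  case (Cons a xs)
  have "0 \<le> M" using Cons.prems[of a] by (meson list.set_intros(1) norm_ge_zero order_trans)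
  have "norm (prod_list (map x (a # xs))) = norm (x a) * norm (prod_list (map x xs))"
    by (simp add: norm_mult)
  also have "\<dots> \<le> M * M ^ length xs"
    using Cons \<open>0 \<le> M\<close> by (intro mult_mono) auto
  finally show ?case by simp
qed simp

text \<open>Any bound will do: it makes the eigenvalue moduli bounded above, without which the
  supremum in \<open>spectral_radius_H\<close> would be a junk value. It comes from evaluating the
  eigenvalue equation at a coordinate of maximal modulus.\<close>

lemma norm_tensor_eigenvalue_le:
  assumes "tensor_eigenvalue n E m lam"
  shows "cmod lam \<le> (\<Sum>i\<in>{1..n}. \<Sum>xs\<in>tuples n (m - 1). adj_tensor E m (i # xs))"
proof -
  obtain x where "\<exists>i\<in>{1..n}. x i \<noteq> 0" and eq: "\<forall>i\<in>{1..n}.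
     (\<Sum>xs\<in>tuples n (m - 1). of_real (adj_tensor E m (i # xs)) * (\<Prod>j\<leftarrow>xs. x j)) = lam * x i ^ (m - 1)"
    using assms unfolding tensor_eigenvalue_def by blast
  then obtain i0 where i0: "i0 \<in> {1..n}" "x i0 \<noteq> 0" by blast
  define M where "M = Max ((\<lambda>j. cmod (x j)) ` {1..n})"
  have "M \<in> (\<lambda>j. cmod (x j)) ` {1..n}" unfolding M_def using i0 by (intro Max_in) auto
  then obtain i where i: "i \<in> {1..n}" "cmod (x i) = M" by auto
  have le: "cmod (x j) \<le> M" if "j \<in> {1..n}" for j unfolding M_def using that by (intro Max_ge) auto
  have "M > 0" using le[OF i0(1)] i0(2) by (meson norm_le_zero_iff not_le order.strict_trans1)
  have "cmod lam * M ^ (m - 1) = cmod (lam * x i ^ (m - 1))" using i by (simp add: norm_mult norm_power)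
  also have "\<dots> = cmod (\<Sum>xs\<in>tuples n (m - 1). of_real (adj_tensor E m (i # xs)) * (\<Prod>j\<leftarrow>xs. x j))"
    using eq i by simp
  also have "\<dots> \<le> (\<Sum>xs\<in>tuples n (m - 1). cmod (of_real (adj_tensor E m (i # xs)) * (\<Prod>j\<leftarrow>xs. x j)))"
    by (rule norm_sum)
  also have "\<dots> \<le> (\<Sum>xs\<in>tuples n (m - 1). adj_tensor E m (i # xs) * M ^ (m - 1))"
  proof (intro sum_mono)
    fix xs assume "xs \<in> tuples n (m - 1)"
    then have "length xs = m - 1" "set xs \<subseteq> {1..n}" unfolding tuples_def by auto
    then have "cmod (\<Prod>j\<leftarrow>xs. x j) \<le> M ^ (m - 1)"
      using norm_prod_list_le[of xs x M] le by (metis subsetD)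
    then show "cmod (of_real (adj_tensor E m (i # xs)) * (\<Prod>j\<leftarrow>xs. x j)) \<le> adj_tensor E m (i # xs) * M ^ (m - 1)"
      using adj_tensor_nonneg[of E m "i # xs"] by (simp add: norm_mult mult_left_mono)
  qed
  also have "\<dots> = (\<Sum>xs\<in>tuples n (m - 1). adj_tensor E m (i # xs)) * M ^ (m - 1)"
    by (simp add: sum_distrib_right)
  finally have "cmod lam \<le> (\<Sum>xs\<in>tuples n (m - 1). adj_tensor E m (i # xs))"
    using \<open>M > 0\<close> by simp
  also have "\<dots> \<le> (\<Sum>i\<in>{1..n}. \<Sum>xs\<in>tuples n (m - 1). adj_tensor E m (i # xs))"
    using i by (intro member_le_sum sum_nonneg adj_tensor_nonneg) auto
  finally show ?thesis .
qed

lemma norm_le_spectral_radius_H: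
  assumes "tensor_eigenvalue n E m lam"
  shows "cmod lam \<le> spectral_radius_H n E m"
proof -
  have "bdd_above {cmod lam | lam. tensor_eigenvalue n E m lam}"
    using norm_tensor_eigenvalue_le[of n E m] unfolding bdd_above_def by blast
  then show ?thesis unfolding spectral_radius_H_def using assms by (intro cSup_upper) auto
qed

lemma tensor_eigenvalue_of_real:
  assumes "\<exists>i\<in>{1..n}. x i \<noteq> 0"
    and "\<forall>i\<in>{1..n}. tensor_apply n m (adj_tensor E m) x i = \<mu> * x i ^ (m - 1)"
  shows "tensor_eigenvalue n E m (of_real \<mu>)"
  unfolding tensor_eigenvalue_def
proof (intro exI[of _ "\<lambda>j. of_real (x j)"] conjI ballI)
  fix i assume "i \<in> {1..n}"
  have "(\<Sum>xs\<in>tuples n (m - 1). of_real (adj_tensor E m (i # xs)) * (\<Prod>j\<leftarrow>xs. of_real (x j)))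
      = (of_real (tensor_apply n m (adj_tensor E m) x i) :: complex)"
    by (simp add: tensor_apply_def of_real_prod_list)
  also have "\<dots> = of_real \<mu> * of_real (x i) ^ (m - 1)"
    using assms(2) \<open>i \<in> {1..n}\<close> by simp
  finally show "(\<Sum>xs\<in>tuples n (m - 1). of_real (adj_tensor E m (i # xs)) * (\<Prod>j\<leftarrow>xs. of_real (x j)))
      = (of_real \<mu> * of_real (x i) ^ (m - 1) :: complex)" .
qed (use assms(1) in simp)

lemma tensor_form_le_spectral_radius_H:
  assumes "m \<ge> 2" "n \<ge> 1" "\<forall>j\<in>{1..n}. y j \<ge> 0"
  shows "tensor_form n m (adj_tensor E m) y \<le> spectral_radius_H n E m * power_sum n m y"
proof -
  obtain x \<mu> where x: "\<forall>j\<in>{1..n}. x j \<ge> 0" "\<exists>j\<in>{1..n}. x j \<noteq> 0"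
    and extremal: "tensor_form n m (adj_tensor E m) x = \<mu> * power_sum n m x"
    and bound: "\<forall>y. (\<forall>j\<in>{1..n}. y j \<ge> 0) \<longrightarrow> tensor_form n m (adj_tensor E m) y \<le> \<mu> * power_sum n m y"
    using rayleigh_maximizer_exists[of m n "adj_tensor E m"] assms(1,2) by auto
  have "\<forall>i\<in>{1..n}. tensor_apply n m (adj_tensor E m) x i = \<mu> * x i ^ (m - 1)"
    using rayleigh_maximizer_eigenvector[OF assms(1) symmetric_adj_tensor adj_tensor_nonneg x(1) extremal bound]
    by blast
  then have "\<mu> \<le> spectral_radius_H n E m"
    using norm_le_spectral_radius_H[OF tensor_eigenvalue_of_real[OF x(2)]] by force
  moreover have "power_sum n m y \<ge> 0"
    unfolding power_sum_def using assms(3) by (intro sum_nonneg zero_le_power) auto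
  ultimately show ?thesis
    using bound assms(3) by (meson mult_right_mono order_trans)
qed

section \<open>Cliques\<close>

lemma card_distinct_lists_eq_mult:
  assumes "finite A" "card A = w" "1 \<le> k" "k \<le> w"
  shows "card {xs. length xs = k \<and> distinct xs \<and> set xs \<subseteq> A} = \<Prod>{w + 1 - k..w - 1} * w"
proof -
  obtain v where v: "w = Suc v" using assms by (cases w) auto
  have "card {xs. length xs = k \<and> distinct xs \<and> set xs \<subseteq> A} = \<Prod>{w + 1 - k..w}"
    using card_lists_distinct_length_eq[of A k] assms by (simp add: Suc_diff_le)
  also have "\<dots> = \<Prod>{w + 1 - k..w - 1} * w"
    unfolding v using assms by (subst prod.nat_ivl_Suc') auto
  finally show ?thesis .
qed

lemma card_distinct_lists_avoiding:
  assumes "finite A" "card A = w" "a \<in> A" "1 \<le> k" "k \<le> w"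
  shows "card {xs. length xs = k \<and> distinct xs \<and> set xs \<subseteq> A - {a}} = (w - k) * \<Prod>{w + 1 - k..w - 1}"
proof (cases "k < w")
  case True
  have "card (A - {a}) = w - 1" using assms by simp
  then have "card {xs. length xs = k \<and> distinct xs \<and> set xs \<subseteq> A - {a}} = \<Prod>{w - k..w - 1}"
    using card_lists_distinct_length_eq[of "A - {a}" k] assms True by (simp add: Suc_diff_Suc)
  also have "\<dots> = (w - k) * \<Prod>{w + 1 - k..w - 1}"
    using True assms(4) by (subst prod.atLeast_Suc_atMost) (auto simp: Suc_diff_le)
  finally show ?thesis .
next
  case False
  have "\<not> (length xs = k \<and> distinct xs \<and> set xs \<subseteq> A - {a})" for xs
  proof
    assume xs: "length xs = k \<and> distinct xs \<and> set xs \<subseteq> A - {a}"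
    then have "card (set xs) \<le> card (A - {a})" using assms(1) by (intro card_mono) auto
    then show False using xs False assms(2,3,4,5) distinct_card[of xs] by simp
  qed
  then have empty: "{xs. length xs = k \<and> distinct xs \<and> set xs \<subseteq> A - {a}} = {}" by blast
  show ?thesis unfolding empty using False by simp
qed

lemma adj_tensor_clique_tuple:
  assumes "m \<ge> 2" "is_clique n E m W" "i \<in> W"
    and "length xs = m - 1" "distinct xs" "set xs \<subseteq> W"
  shows "adj_tensor E m (i # xs) = (if i \<in> set xs then 2 / fact m else 1 / fact (m - 1))"
proof -
  have card: "card (set (i # xs)) = (if i \<in> set xs then m - 1 else m)"
    using assms(1,4,5) distinct_card[of xs] by (auto simp: insert_absorb)
  moreover have "set (i # xs) \<subseteq> W" using assms(3,6) by simp
  ultimately have "set (i # xs) \<in> E"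
    using assms(2) unfolding is_clique_def by (metis (full_types))
  then show ?thesis
    using card assms(1) adj_tensor_rank_edge[of "i # xs" E m] adj_tensor_rank_minus_1_edge[of "i # xs" E m]
    by (auto split: if_splits)
qed

lemma power_card_le_prod_atLeastAtMost: "(a::nat) ^ card {a..b} \<le> \<Prod>{a..b}"
  using prod_mono[of "{a..b}" "\<lambda>_. a" id] by simp

lemma power_div_fact_le_clique_count:
  assumes "m \<ge> 2" "b \<ge> 1" "real b ^ (m - 2) \<le> Q"
  shows "real b ^ (m - 1) / fact (m - 1) \<le> real (m - 1) * Q * (2 / fact m) + real (b - 1) * Q / fact (m - 1)"
proof -
  have fact_m: "(fact m :: real) = real m * fact (m - 1)" using assms(1) fact_reduce[of m] by simp
  have "1 \<le> 2 * (real m - 1) / real m" using assms(1) by (simp add: field_simps)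
  then have "real b \<le> real (b - 1) + 2 * (real m - 1) / real m" using assms(2) by (simp add: of_nat_diff)
  moreover have "real b ^ (m - 1) = real b ^ (m - 2) * real b"
    using assms(1) by (metis Suc_diff_Suc Suc_1 Suc_le_lessD power_Suc2 diff_Suc_1)
  moreover have "0 \<le> Q" using assms(3) by (metis of_nat_0_le_iff order_trans zero_le_power)
  ultimately have "real b ^ (m - 1) \<le> Q * (real (b - 1) + 2 * (real m - 1) / real m)"
    using assms(3) by (simp add: mult_mono)
  also have "\<dots> = (real (m - 1) * Q * (2 / fact m) + real (b - 1) * Q / fact (m - 1)) * fact (m - 1)"
    using assms(1) unfolding fact_m by (simp add: field_simps of_nat_diff)
  finally show ?thesis by (simp add: divide_le_eq)
qed

lemma tensor_apply_clique_indicator_ge: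
  assumes "m \<ge> 2" "is_clique n E m W" "card W = w" "w \<ge> m - 1" "i \<in> W"
  shows "real (w + 2 - m) ^ (m - 1) / fact (m - 1) \<le> tensor_apply n m (adj_tensor E m) (indicator W) i"
proof -
  have "W \<subseteq> {1..n}" using assms(2) unfolding is_clique_def by simp
  then have "finite W" using finite_subset by blast
  define D where "D = {xs. length xs = m - 1 \<and> distinct xs \<and> set xs \<subseteq> W}"
  define T where "T = {xs. length xs = m - 1 \<and> distinct xs \<and> set xs \<subseteq> W - {i}}"
  define Q where "Q = \<Prod>{w + 2 - m..w - 1}"
  have "T \<subseteq> D" "finite D" unfolding T_def D_def
    using finite_lists_length_eq[OF \<open>finite W\<close>, of "m - 1"] by (auto elim: finite_subset[rotated])
  have card_D: "card D = Q * w" and card_T: "card T = (w + 1 - m) * Q"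
    using card_distinct_lists_eq_mult[OF \<open>finite W\<close> assms(3), of "m - 1"]
      card_distinct_lists_avoiding[OF \<open>finite W\<close> assms(3,5), of "m - 1"] assms(1,4)
    unfolding D_def T_def Q_def by (simp_all add: Suc_diff_le numeral_2_eq_2)
  have "card {w + 2 - m..w - 1} = m - 2" using assms(1,4) by simp
  then have Q_bound: "real (w + 2 - m) ^ (m - 2) \<le> real Q"
    using power_card_le_prod_atLeastAtMost[of "w + 2 - m" "w - 1"] unfolding Q_def
    by (metis of_nat_le_iff of_nat_power)
  have "card (D - T) = (w - (w + 1 - m)) * Q"
    using card_Diff_subset[OF finite_subset[OF \<open>T \<subseteq> D\<close> \<open>finite D\<close>] \<open>T \<subseteq> D\<close>] card_D card_T
    by (simp add: diff_mult_distrib diff_mult_distrib2 mult.commute)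
  also have "w - (w + 1 - m) = m - 1" using assms(1,4) by simp
  finally have card_DT: "card (D - T) = (m - 1) * Q" .
  have indicator_prod: "prod_list (map (indicator W) xs) = (1::real)" if "set xs \<subseteq> W" for xs
    using that by (induction xs) auto
  have entry: "adj_tensor E m (i # xs) * prod_list (map (indicator W) xs)
      = (if xs \<in> T then 1 / fact (m - 1) else 2 / fact m)" if "xs \<in> D" for xs
    using that adj_tensor_clique_tuple[OF assms(1,2,5)] unfolding D_def T_def
    by (auto simp: indicator_prod)
  have "real (m - 1) * real Q * (2 / fact m) + real (w + 2 - m - 1) * real Q / fact (m - 1)
      = (\<Sum>xs\<in>D - T. adj_tensor E m (i # xs) * prod_list (map (indicator W) xs))
        + (\<Sum>xs\<in>T. adj_tensor E m (i # xs) * prod_list (map (indicator W) xs))"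
    using entry \<open>T \<subseteq> D\<close> card_DT card_T by (simp add: subsetD)
  also have "\<dots> = (\<Sum>xs\<in>D. adj_tensor E m (i # xs) * prod_list (map (indicator W) xs))"
    by (rule sum.subset_diff[OF \<open>T \<subseteq> D\<close> \<open>finite D\<close>, symmetric])
  also have "\<dots> \<le> tensor_apply n m (adj_tensor E m) (indicator W) i"
    unfolding tensor_apply_def using \<open>W \<subseteq> {1..n}\<close>
    by (intro sum_mono2 finite_tuples mult_nonneg_nonneg adj_tensor_nonneg prod_list_nonneg)
       (auto simp: D_def tuples_def)
  finally show ?thesis
    using assms(4) by (intro order_trans[OF power_div_fact_le_clique_count[OF assms(1) _ Q_bound]]) auto
qed

lemma tensor_form_clique_indicator_ge:
  assumes "m \<ge> 2" "is_clique n E m W" "card W = w" "w \<ge> m - 1"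
  shows "real w * (real (w + 2 - m) ^ (m - 1) / fact (m - 1)) \<le> tensor_form n m (adj_tensor E m) (indicator W)"
proof -
  have "W \<subseteq> {1..n}" using assms(2) unfolding is_clique_def by simp
  have "real w * (real (w + 2 - m) ^ (m - 1) / fact (m - 1))
      = (\<Sum>i\<in>W. real (w + 2 - m) ^ (m - 1) / fact (m - 1))" using assms(3) by simp
  also have "\<dots> \<le> (\<Sum>i\<in>W. tensor_apply n m (adj_tensor E m) (indicator W) i)"
    by (intro sum_mono tensor_apply_clique_indicator_ge assms)
  also have "\<dots> = (\<Sum>i\<in>{1..n}. indicator W i * tensor_apply n m (adj_tensor E m) (indicator W) i)"
    using \<open>W \<subseteq> {1..n}\<close> by (simp add: indicator_def sum.If_cases Int_absorb1)
  also have "\<dots> = tensor_form n m (adj_tensor E m) (indicator W)"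
    using assms(1) by (simp add: tensor_form_eq_sum_tensor_apply)
  finally show ?thesis .
qed

lemma power_sum_indicator:
  assumes "W \<subseteq> {1..n}" "m \<ge> 1"
  shows "power_sum n m (indicator W) = real (card W)"
proof -
  have "power_sum n m (indicator W) = (\<Sum>i\<in>{1..n}. if i \<in> W then 1 else 0)"
    unfolding power_sum_def using assms(2) by (intro sum.cong) (auto simp: indicator_def)
  also have "\<dots> = real (card W)"
    using assms(1) by (simp add: sum.If_cases Int_absorb1 Int_absorb2)
  finally show ?thesis .
qed

lemma mm1_graph_nondegenerate:
  assumes "hypergraph n E" "mm1_graph m E"
  shows "m \<ge> 2" "n \<ge> 1" "E \<noteq> {}"
proof -
  obtain e where e: "e \<in> E" "card e = m - 1"
    using assms(2) unfolding mm1_graph_def by (metis imageE insertI1 insert_commute)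
  then have "e \<noteq> {}" "e \<subseteq> {1..n}" using assms(1) unfolding hypergraph_def by auto
  then have "card e \<ge> 1" using finite_subset[of e "{1..n}"] by (simp add: Suc_le_eq card_gt_0_iff)
  then show "m \<ge> 2" "n \<ge> 1" "E \<noteq> {}" using e \<open>e \<noteq> {}\<close> \<open>e \<subseteq> {1..n}\<close> by auto
qed

lemma clique_number_attained:
  assumes "m \<ge> 2" "E \<noteq> {}"
  obtains W where "is_clique n E m W" "card W = clique_number n E m"
proof -
  have "{W. is_clique n E m W} \<subseteq> Pow {1..n}" unfolding is_clique_def by auto
  then have "finite {W. is_clique n E m W}" by (rule finite_subset) simp
  moreover have "is_clique n E m {}" unfolding is_clique_def using assms(1) by auto
  ultimately have "clique_number n E m \<in> card ` {W. is_clique n E m W}"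
    unfolding clique_number_def using assms(2) by (auto intro!: Max_in)
  then obtain W where "is_clique n E m W" "clique_number n E m = card W" by auto
  then show thesis using that by simp
qed

lemma le_powr_inverse_if_power_le:
  fixes b X :: real
  assumes "0 \<le> b" "k \<ge> 1" "b ^ k \<le> X"
  shows "b \<le> X powr (1 / real k)"
proof -
  have "b = (b ^ k) powr (1 / real k)"
  proof (cases "b = 0")
    case False
    then have "b ^ k = b powr real k" using assms(1) by (simp add: powr_realpow)
    then show ?thesis using assms(1,2) by (simp add: powr_powr)
  qed (use assms(2) in simp)
  also have "\<dots> \<le> X powr (1 / real k)"
    using assms by (intro powr_mono2) auto
  finally show ?thesis .
qed

theorem mainTheorem2:
  fixes n m :: nat and E :: "nat set set"
  assumes "hypergraph n E" and "mm1_graph m E"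
  shows "real (clique_number n E m)
           \<le> real m - 2 + (fact (m - 1) * spectral_radius_H n E m) powr (1 / real (m - 1))"
proof -
  have m: "m \<ge> 2" and n: "n \<ge> 1" and E: "E \<noteq> {}" using mm1_graph_nondegenerate[OF assms] by auto
  obtain W where W: "is_clique n E m W" "card W = clique_number n E m"
    using clique_number_attained[OF m E] .
  define w where "w = clique_number n E m"
  show ?thesis
  proof (cases "w \<ge> m - 1")
    case False
    then have "real w \<le> real m - 2" by linarith
    then show ?thesis unfolding w_def using powr_ge_zero by (smt (verit))
  next
    case True
    have "W \<subseteq> {1..n}" using W(1) unfolding is_clique_def by simp
    have "real w * (real (w + 2 - m) ^ (m - 1) / fact (m - 1)) \<le> tensor_form n m (adj_tensor E m) (indicator W)"
      using tensor_form_clique_indicator_ge[OF m W(1)] W(2) True unfolding w_def by blast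
    also have "\<dots> \<le> spectral_radius_H n E m * real w"
      using tensor_form_le_spectral_radius_H[OF m n, of "indicator W"] power_sum_indicator[OF \<open>W \<subseteq> {1..n}\<close>] m W(2)
      unfolding w_def by simp
    finally have "real (w + 2 - m) ^ (m - 1) \<le> fact (m - 1) * spectral_radius_H n E m"
      using True m by (simp add: field_simps mult_le_cancel_left_pos)
    then have "real (w + 2 - m) \<le> (fact (m - 1) * spectral_radius_H n E m) powr (1 / real (m - 1))"
      using m by (intro le_powr_inverse_if_power_le) auto
    then show ?thesis using True m unfolding w_def by (simp add: of_nat_diff)
  qed
qed

end
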